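(* Fix a positive integer $r$. There are only finitely many tuples of positive integers $(d,e_1,\dots,e_r)$ satisfying all of the following: - $d > e_1 \ge e_2\ge\cdots\ge e_r$; - $e_k \mid d$ for every $k$; - $\sum_{k=1}^r (e_k+1) = d+1$. Equivalently, for each $r$ there are only finitely many "neat" canonical forms $p = \sum_{k=1}^r f_k^{d/e_k}$ (with $f_k\in H_{e_k}(\mathbb{C}^2)$) of the type in the following statement: for $m=0$, a general binary $d$-ic form is a sum $\sum_{k=1}^r f_k^{d/e_k}$ with $\deg f_k=e_k$ whenever the three conditions above hold.
   Context: $H_d(\mathbb{C}^n)$ denotes the complex vector space of homogeneous polynomials of degree $d$ in $n$ variables. *)

theory Defs
  imports Main
begin

end

theory Submission
  imports Defs Complex_Main
begin

(* For a tuple (d, e_1, ..., e_r) as in the theorem put n_k = d / e_k.  Then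
   sum_k 1/n_k = (sum_k e_k)/d = 1 - (r-1)/d, a sum of r unit fractions lying strictly below 1.
   The key fact is a gap property of unit fractions: for fixed r and beta > 0, a sum of r unit
   fractions that is smaller than beta stays below beta by at least some c > 0 depending only
   on r and beta.  It is proved by induction on r: if the sum is close to beta, its largest term
   1/v is not tiny, so v ranges over a finite set, and the induction hypothesis applies to the
   remaining r-1 terms with bound beta - 1/v.  Applied with beta = 1 it yields (r-1)/d >= c,
   so d <= r/c; since every e_k divides d, all entries are bounded as well, and the set
   of tuples is finite. *)

definition unit_frac_sum :: "nat list \<Rightarrow> real" where
  "unit_frac_sum ns = (\<Sum>n\<leftarrow>ns. 1 / real n)"

lemma unit_frac_sum_simps [simp]:
  "unit_frac_sum [] = 0"
  "unit_frac_sum (n # ns) = 1 / real n + unit_frac_sum ns"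
  by (simp_all add: unit_frac_sum_def)

lemma unit_frac_sum_nonneg: "unit_frac_sum ns \<ge> 0"
  by (induction ns) auto

lemma unit_frac_sum_remove1:
  assumes "v \<in> set ns"
  shows "unit_frac_sum ns = 1 / real v + unit_frac_sum (remove1 v ns)"
  using assms unfolding unit_frac_sum_def by (simp add: sum_list_map_remove1)

lemma unit_frac_sum_le:
  assumes "\<forall>n\<in>set ns. v \<le> n" and "v > 0"
  shows "unit_frac_sum ns \<le> real (length ns) / real v"
  using assms
proof (induction ns)
  case (Cons n ns)
  have "1 / real n \<le> 1 / real v" using Cons.prems by (simp add: frac_le)
  with Cons show ?case by (simp add: add_divide_distrib)
qed simp

(* A unit-fraction sum exceeding beta/2 has its smallest denominator below 2*length/beta;
   this is what makes the case analysis in the gap lemma finite. *)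
lemma unit_frac_sum_min_denominator:
  assumes "ns \<noteq> []" and "\<forall>n\<in>set ns. n > 0" and "\<beta> > 0"
    and "\<beta> / 2 < unit_frac_sum ns"
  shows "real (Min (set ns)) < 2 * real (length ns) / \<beta>"
proof -
  let ?v = "Min (set ns)"
  have "?v \<in> set ns" using assms(1) by simp
  hence v_pos: "?v > 0" using assms(2) by blast
  have "unit_frac_sum ns \<le> real (length ns) / real ?v"
    by (rule unit_frac_sum_le) (use v_pos in auto)
  hence "\<beta> / 2 < real (length ns) / real ?v" using assms(4) by linarith
  thus ?thesis using v_pos assms(3) by (simp add: field_simps)
qed

lemma unit_frac_sum_gap:
  assumes "\<beta> > 0"
  shows "\<exists>c>0. \<forall>ns. length ns = r \<and> (\<forall>n\<in>set ns. n > 0) \<and> unit_frac_sum ns < \<beta>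
           \<longrightarrow> c \<le> \<beta> - unit_frac_sum ns"
  using assms
proof (induction r arbitrary: \<beta>)
  case 0
  then show ?case by auto
next
  case (Suc r)
  define V where "V = {v::nat. 0 < v \<and> real v < 2 * real (Suc r) / \<beta> \<and> 1 / real v < \<beta>}"
  have "V \<subseteq> {..nat \<lceil>2 * real (Suc r) / \<beta>\<rceil>}" unfolding V_def by (auto, linarith)
  hence "finite V" by (rule finite_subset) simp
  have "\<forall>v\<in>V. \<exists>c>0. \<forall>ns. length ns = r \<and> (\<forall>n\<in>set ns. n > 0) \<and>
          unit_frac_sum ns < \<beta> - 1 / real v \<longrightarrow> c \<le> (\<beta> - 1 / real v) - unit_frac_sum ns"
    using Suc.IH by (auto simp: V_def)
  then obtain cv where cv: "\<And>v. v \<in> V \<Longrightarrow> cv v > 0"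
    and cv_gap: "\<And>v ns. v \<in> V \<Longrightarrow> length ns = r \<Longrightarrow> \<forall>n\<in>set ns. n > 0 \<Longrightarrow>
          unit_frac_sum ns < \<beta> - 1 / real v \<Longrightarrow> cv v \<le> (\<beta> - 1 / real v) - unit_frac_sum ns"
    by metis
  define c where "c = Min (insert (\<beta> / 2) (cv ` V))"
  have "c > 0" using \<open>finite V\<close> cv Suc.prems by (auto simp: c_def)
  moreover have "c \<le> \<beta> - unit_frac_sum ns"
    if ns: "length ns = Suc r" "\<forall>n\<in>set ns. n > 0" "unit_frac_sum ns < \<beta>" for ns
  proof (cases "unit_frac_sum ns \<le> \<beta> / 2")
    case True
    have "c \<le> \<beta> / 2" unfolding c_def using \<open>finite V\<close> by (intro Min_le) auto
    with True show ?thesis by linarith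
  next
    case False
    define v where "v = Min (set ns)"
    have "ns \<noteq> []" using ns(1) by auto
    hence "v \<in> set ns" by (simp add: v_def)
    have split: "unit_frac_sum ns = 1 / real v + unit_frac_sum (remove1 v ns)"
      using \<open>v \<in> set ns\<close> by (rule unit_frac_sum_remove1)
    have "real v < 2 * real (Suc r) / \<beta>"
      using unit_frac_sum_min_denominator[OF \<open>ns \<noteq> []\<close> ns(2) Suc.prems] False ns(1)
      by (simp add: v_def)
    moreover have "1 / real v < \<beta>"
      using split ns(3) unit_frac_sum_nonneg[of "remove1 v ns"] by linarith
    ultimately have "v \<in> V" using ns(2) \<open>v \<in> set ns\<close> by (auto simp: V_def)
    have "cv v \<le> (\<beta> - 1 / real v) - unit_frac_sum (remove1 v ns)"
      by (rule cv_gap[OF \<open>v \<in> V\<close>])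
        (use ns \<open>v \<in> set ns\<close> split in \<open>auto simp: length_remove1 dest: notin_set_remove1\<close>)
    moreover have "c \<le> cv v" using \<open>finite V\<close> \<open>v \<in> V\<close> by (simp add: c_def)
    ultimately show ?thesis using split by linarith
  qed
  ultimately show ?case by blast
qed

lemma unit_frac_sum_cofactors:
  assumes "d > 0" and "\<forall>e\<in>set es. e > 0 \<and> e dvd d"
  shows "unit_frac_sum (map (\<lambda>e. d div e) es) = real (sum_list es) / real d"
  using assms
proof (induction es)
  case (Cons e es)
  have "1 / real (d div e) = real e / real d"
    using Cons.prems by (auto simp: real_of_nat_div field_simps elim!: dvdE)
  with Cons show ?case by (simp add: add_divide_distrib)
qed simp

lemma divisor_sum_deficit:
  "\<exists>c>0. \<forall>d es. length es = r \<and> d > 0 \<and> (\<forall>e\<in>set es. e > 0 \<and> e dvd d) \<and> sum_list es < d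
     \<longrightarrow> c * real d \<le> real (d - sum_list es)"
proof -
  obtain c where "c > 0" and gap: "\<And>ns. length ns = r \<Longrightarrow> \<forall>n\<in>set ns. n > 0 \<Longrightarrow>
      unit_frac_sum ns < 1 \<Longrightarrow> c \<le> 1 - unit_frac_sum ns"
    using unit_frac_sum_gap[of 1 r] by auto
  have "c * real d \<le> real (d - sum_list es)"
    if "length es = r" "d > 0" and es: "\<forall>e\<in>set es. e > 0 \<and> e dvd d" and "sum_list es < d"
    for d es
  proof -
    let ?ns = "map (\<lambda>e. d div e) es"
    have sum: "unit_frac_sum ?ns = real (sum_list es) / real d"
      using \<open>d > 0\<close> es by (rule unit_frac_sum_cofactors)
    have "\<forall>n\<in>set ?ns. n > 0"
      using es \<open>d > 0\<close> by (auto simp: div_greater_zero_iff dvd_imp_le)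
    moreover have "unit_frac_sum ?ns < 1" using sum \<open>sum_list es < d\<close> by simp
    ultimately have "c \<le> 1 - real (sum_list es) / real d"
      using gap[of ?ns] sum \<open>length es = r\<close> by simp
    thus ?thesis using \<open>d > 0\<close> \<open>sum_list es < d\<close> by (simp add: field_simps of_nat_diff)
  qed
  with \<open>c > 0\<close> show ?thesis by blast
qed

theorem theorem4p4:
  fixes r :: nat
  assumes "r \<ge> 1"
  shows "finite {(d :: nat, es :: nat list).
            length es = r \<and> d > 0 \<and> (\<forall>k<r. es ! k > 0) \<and>
            d > es ! 0 \<and> (\<forall>k. Suc k < r \<longrightarrow> es ! k \<ge> es ! Suc k) \<and>
            (\<forall>k<r. es ! k dvd d) \<and>
            (\<Sum>k<r. es ! k + 1) = d + 1}" (is "finite ?S")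
proof -
  obtain c where "c > 0" and deficit: "\<And>d es. length es = r \<Longrightarrow> d > 0 \<Longrightarrow>
      \<forall>e\<in>set es. e > 0 \<and> e dvd d \<Longrightarrow> sum_list es < d \<Longrightarrow> c * real d \<le> real (d - sum_list es)"
    using divisor_sum_deficit[of r] by auto
  define D where "D = nat \<lceil>real r / c\<rceil>"
  have "d \<le> D \<and> set es \<subseteq> {..D}" if "(d, es) \<in> ?S" for d es
  proof -
    from that have len: "length es = r" and "d > 0" and "es ! 0 < d"
      and es: "\<forall>e\<in>set es. e > 0 \<and> e dvd d" and sum: "(\<Sum>k<r. es ! k + 1) = d + 1"
      by (auto simp: in_set_conv_nth)
    have "(\<Sum>k<r. es ! k + 1) = sum_list es + r"
      unfolding sum.distrib using len by (simp add: sum_list_sum_nth atLeast0LessThan)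
    with sum have "sum_list es + r = d + 1" by simp
    have "r \<noteq> 1" using \<open>sum_list es + r = d + 1\<close> \<open>es ! 0 < d\<close> len
      by (cases es) auto
    hence "sum_list es < d" and "d - sum_list es = r - 1"
      using assms \<open>sum_list es + r = d + 1\<close> by auto
    hence "c * real d \<le> real r" using deficit[OF len \<open>d > 0\<close> es] by simp
    hence "real d \<le> real r / c" using \<open>c > 0\<close> by (simp add: field_simps)
    hence "d \<le> D" unfolding D_def by linarith
    moreover have "e \<le> d" if "e \<in> set es" for e using es that \<open>d > 0\<close> by (simp add: dvd_imp_le)
    ultimately show ?thesis by (auto intro: order.trans)
  qed
  hence "?S \<subseteq> {..D} \<times> {es. set es \<subseteq> {..D} \<and> length es = r}" by auto
  thus ?thesis by (rule finite_subset) (auto intro: finite_lists_length_eq)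
qed

end
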